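(* Let $n\ge 2$ and let $G$ be a graph on $2n+1$ vertices with at least $n^2+n$ edges that contains no two distinct vertices of the same degree joined by a path of length three. Let $\beta$ be the largest integer such that $G$ contains two distinct vertices of degree $\beta$. Then $\beta\ge 3$.
   Context: A path of length three joining vertices $a$ and $b$ is a path $a\,x\,y\,b$ with four distinct vertices and three edges. Graphs are finite and simple. *)

theory Defs
  imports Main
begin

definition simple_graph :: "'a set \<Rightarrow> 'a set set \<Rightarrow> bool" where
  "simple_graph V E \<longleftrightarrow> finite V \<and> (\<forall>e\<in>E. \<exists>u v. u \<in> V \<and> v \<in> V \<and> u \<noteq> v \<and> e = {u, v})"

definition adj :: "'a set set \<Rightarrow> 'a \<Rightarrow> 'a \<Rightarrow> bool" where
  "adj E u v \<longleftrightarrow> {u, v} \<in> E"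

definition degree :: "'a set \<Rightarrow> 'a set set \<Rightarrow> 'a \<Rightarrow> nat" where
  "degree V E v = card {u \<in> V. adj E v u}"

definition path3 :: "'a set \<Rightarrow> 'a set set \<Rightarrow> 'a \<Rightarrow> 'a \<Rightarrow> bool" where
  "path3 V E a b \<longleftrightarrow> (\<exists>x y. x \<in> V \<and> y \<in> V \<and> distinct [a, x, y, b] \<and>
      adj E a x \<and> adj E x y \<and> adj E y b)"

definition beta :: "'a set \<Rightarrow> 'a set set \<Rightarrow> nat" where
  "beta V E = (GREATEST k. \<exists>u\<in>V. \<exists>v\<in>V. u \<noteq> v \<and> degree V E u = k \<and> degree V E v = k)"

end

theory Submission
  imports Defs
begin

text \<open>Suppose \<open>\<beta> \<le> 2\<close>, so vertices of degree at least 3 have pairwise distinct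
  degrees. If no vertex had degree \<open>2n\<close>, these degrees would be distinct numbers in
  \<open>[3, 2n-1]\<close> and the degree sum would fall short of \<open>2(n\<^sup>2+n)\<close>. So some vertex
  \<open>x\<close> is adjacent to all others. Two further vertices \<open>a \<noteq> b\<close> of equal degree then
  satisfy \<open>N(a) \<subseteq> {x, b}\<close>, since any other neighbour \<open>p\<close> of \<open>a\<close> yields the path
  \<open>a p x b\<close>. Hence at most two vertices besides \<open>x\<close> have degree 2, and a vertex
  \<open>v \<noteq> x\<close> of degree at least 3 has all its neighbours among \<open>x\<close>, the other such
  vertices, and at most one vertex of degree 2; if there are \<open>k\<close> such vertices, their
  \<open>k\<close> distinct degrees lie in \<open>[3, k+1]\<close>, which is impossible. So the degree sum is
  at most \<open>2n + 2n + 2\<close>, again too small.\<close>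

definition neighbours :: "'a set \<Rightarrow> 'a set set \<Rightarrow> 'a \<Rightarrow> 'a set" where
  "neighbours V E v = {u \<in> V. adj E v u}"

lemma degree_eq_card_neighbours: "degree V E v = card (neighbours V E v)"
  by (simp add: degree_def neighbours_def)

lemma adj_commute: "adj E a b \<longleftrightarrow> adj E b a"
  by (simp add: adj_def insert_commute)

lemma simple_graph_adjD:
  assumes "simple_graph V E" "adj E a b"
  shows "a \<in> V" "b \<in> V" "a \<noteq> b"
proof -
  from assms obtain u v where "u \<in> V" "v \<in> V" "u \<noteq> v" "{a, b} = {u, v}"
    unfolding simple_graph_def adj_def by blast
  then show "a \<in> V" "b \<in> V" "a \<noteq> b"
    by (auto simp: doubleton_eq_iff)
qed

lemma simple_graph_finite: "simple_graph V E \<Longrightarrow> finite V"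
  by (simp add: simple_graph_def)

lemma neighbours_subset:
  "simple_graph V E \<Longrightarrow> neighbours V E v \<subseteq> V - {v}"
  by (auto simp: neighbours_def dest: simple_graph_adjD)

lemma finite_neighbours: "finite V \<Longrightarrow> finite (neighbours V E v)"
  by (simp add: neighbours_def)

lemma degree_le_card: "finite V \<Longrightarrow> degree V E v \<le> card V"
  by (simp add: degree_def card_mono)

lemma degree_le_card_minus_one:
  assumes "simple_graph V E" and "v \<in> V"
  shows "degree V E v \<le> card V - 1"
proof -
  have "degree V E v \<le> card (V - {v})"
    unfolding degree_eq_card_neighbours
    using assms by (intro card_mono) (auto simp: simple_graph_finite neighbours_subset)
  with assms show ?thesis
    by simp
qed

lemma adj_if_degree_eq_card_minus_one:
  assumes "simple_graph V E" and "x \<in> V" and "degree V E x = card V - 1"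
    and "v \<in> V" and "v \<noteq> x"
  shows "adj E x v"
proof -
  have "neighbours V E x = V - {x}"
    using assms by (intro card_subset_eq)
      (auto simp: simple_graph_finite neighbours_subset degree_eq_card_neighbours)
  with assms show ?thesis
    by (auto simp: neighbours_def)
qed

lemma degree_sum_eq_twice_card_edges:
  assumes graph: "simple_graph V E"
  shows "(\<Sum>v\<in>V. degree V E v) = 2 * card E"
proof -
  define ends where "ends e = {p. {fst p, snd p} = e}" for e :: "'a set"
  have ends_edge: "ends {a, b} = {(a, b), (b, a)}" for a b
    by (auto simp: ends_def doubleton_eq_iff)
  have "E \<subseteq> Pow V"
    using graph unfolding simple_graph_def by auto
  then have "finite E"
    using graph by (meson finite_Pow_iff finite_subset simple_graph_finite)
  have "(\<Sum>v\<in>V. degree V E v) = card (SIGMA v:V. neighbours V E v)"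
    using graph by (simp add: degree_eq_card_neighbours simple_graph_finite finite_neighbours)
  also have "(SIGMA v:V. neighbours V E v) = (\<Union>e\<in>E. ends e)"
    using simple_graph_adjD[OF graph] by (auto simp: ends_def adj_def neighbours_def)
  also have "card (\<Union>e\<in>E. ends e) = (\<Sum>e\<in>E. card (ends e))"
  proof (rule card_UN_disjoint[OF \<open>finite E\<close>])
    show "\<forall>e\<in>E. finite (ends e)"
      using graph ends_edge unfolding simple_graph_def by fastforce
    show "\<forall>e\<in>E. \<forall>e'\<in>E. e \<noteq> e' \<longrightarrow> ends e \<inter> ends e' = {}"
      by (auto simp: ends_def)
  qed
  also have "\<dots> = (\<Sum>e\<in>E. 2)"
    using graph ends_edge unfolding simple_graph_def by (intro sum.cong) auto
  finally show ?thesis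
    by simp
qed

lemma degree_le_beta:
  assumes "finite V" and "u \<in> V" "v \<in> V" "u \<noteq> v" "degree V E u = degree V E v"
  shows "degree V E u \<le> beta V E"
  unfolding beta_def
  using assms degree_le_card[OF \<open>finite V\<close>]
  by (intro Greatest_le_nat[where b = "card V"]) auto

lemma inj_on_large_degrees:
  assumes "finite V" and "beta V E < k"
  shows "inj_on (degree V E) {v \<in> V. k \<le> degree V E v}"
  using assms degree_le_beta[OF \<open>finite V\<close>] by (fastforce intro: inj_onI)

text \<open>The values above 2 exceed 2 by pairwise distinct amounts in \<open>{1..m-2}\<close>, whose
  sum is at most \<open>(m-2)(m-1)/2\<close>.\<close>

lemma sum_le_if_inj_on_large_values:
  fixes f :: "'a \<Rightarrow> nat"
  assumes "finite V" and bounded: "\<And>v. v \<in> V \<Longrightarrow> f v \<le> m"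
    and inj: "inj_on f {v \<in> V. 3 \<le> f v}"
  shows "2 * (\<Sum>v\<in>V. f v) \<le> 4 * card V + (m - 2) * (m - 1)"
proof -
  define H where "H = {v \<in> V. 3 \<le> f v}"
  have "inj_on (\<lambda>v. f v - 2) H"
    using inj by (auto simp: H_def inj_on_def)
  have "(\<Sum>v\<in>V. f v) = (\<Sum>v\<in>V. min (f v) 2 + (f v - 2))"
    by (intro sum.cong) auto
  also have "\<dots> = (\<Sum>v\<in>V. min (f v) 2) + (\<Sum>v\<in>V. f v - 2)"
    by (rule sum.distrib)
  also have "(\<Sum>v\<in>V. min (f v) 2) \<le> 2 * card V"
    using sum_bounded_above[of V "\<lambda>v. min (f v) 2" 2] by simp
  also have "(\<Sum>v\<in>V. f v - 2) = (\<Sum>v\<in>H. f v - 2)"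
    using \<open>finite V\<close> by (intro sum.mono_neutral_right) (auto simp: H_def)
  also have "\<dots> = \<Sum>((\<lambda>v. f v - 2) ` H)"
    using sum.reindex[OF \<open>inj_on (\<lambda>v. f v - 2) H\<close>, of id] by simp
  also have "\<dots> \<le> \<Sum>{0..m - 2}"
    using bounded by (intro sum_mono2) (force simp: H_def)+
  also have "\<dots> = (m - 2) * (m - 1) div 2"
  proof -
    have "m - 2 = 0 \<or> Suc (m - 2) = m - 1"
      by arith
    then have "(m - 2) * Suc (m - 2) = (m - 2) * (m - 1)"
      by (metis mult_0)
    then show ?thesis
      by (simp only: gauss_sum_nat)
  qed
  finally show ?thesis
    by linarith
qed

locale universal_vertex =
  fixes V :: "'a set" and E :: "'a set set" and x :: 'a
  assumes graph: "simple_graph V E"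
    and x_in_V: "x \<in> V"
    and adj_x: "\<And>v. v \<in> V \<Longrightarrow> v \<noteq> x \<Longrightarrow> adj E v x"
    and no_path3: "\<And>a b. a \<in> V \<Longrightarrow> b \<in> V \<Longrightarrow> a \<noteq> b \<Longrightarrow>
      degree V E a = degree V E b \<Longrightarrow> \<not> path3 V E a b"
begin

abbreviation "d \<equiv> degree V E"
abbreviation "N \<equiv> neighbours V E"

lemma finite_V: "finite V"
  using graph by (rule simple_graph_finite)

lemma x_in_neighbours: "v \<in> V \<Longrightarrow> v \<noteq> x \<Longrightarrow> x \<in> N v"
  using adj_x x_in_V by (simp add: neighbours_def)

lemma neighbours_subset_if_degree_eq:
  assumes "a \<in> V - {x}" "b \<in> V - {x}" "a \<noteq> b" "d a = d b"
  shows "N a \<subseteq> {x, b}"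
proof
  fix p
  assume "p \<in> N a"
  then have "p \<in> V" "adj E a p" "p \<noteq> a"
    using neighbours_subset[OF graph] by (auto simp: neighbours_def)
  show "p \<in> {x, b}"
  proof (rule ccontr)
    assume "p \<notin> {x, b}"
    have "adj E p x" "adj E x b"
      using assms \<open>p \<in> V\<close> \<open>p \<notin> {x, b}\<close> adj_x adj_commute[of E x b] by auto
    with assms \<open>p \<in> V\<close> \<open>adj E a p\<close> \<open>p \<noteq> a\<close> \<open>p \<notin> {x, b}\<close> have "path3 V E a b"
      unfolding path3_def using x_in_V by (intro exI[of _ p] exI[of _ x]) auto
    with assms no_path3 show False
      by blast
  qed
qed

lemma card_degree_two_le_two: "card {v \<in> V - {x}. d v = 2} \<le> 2"
proof (cases "{v \<in> V - {x}. d v = 2} = {}")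
  case False
  then obtain a where a: "a \<in> V - {x}" "d a = 2"
    by blast
  have "card (N a - {x}) = 1"
    using a x_in_neighbours finite_neighbours[OF finite_V]
    by (simp add: degree_eq_card_neighbours)
  have "{v \<in> V - {x}. d v = 2} \<subseteq> insert a (N a - {x})"
  proof
    fix b
    assume b: "b \<in> {v \<in> V - {x}. d v = 2}"
    show "b \<in> insert a (N a - {x})"
    proof (cases "b = a")
      case False
      then have "N a \<subseteq> {x, b}"
        using a b by (intro neighbours_subset_if_degree_eq) auto
      moreover have "\<not> N a \<subseteq> {x}"
        using a card_mono[of "{x}" "N a"] by (auto simp: degree_eq_card_neighbours)
      ultimately show ?thesis
        using b by auto
    qed simp
  qed
  then have "card {v \<in> V - {x}. d v = 2} \<le> card (insert a (N a - {x}))"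
    using finite_neighbours[OF finite_V] by (intro card_mono) auto
  also have "\<dots> \<le> Suc (card (N a - {x}))"
    using finite_neighbours[OF finite_V] by (simp add: card_insert_if)
  finally show ?thesis
    using \<open>card (N a - {x}) = 1\<close> by simp
qed (metis card.empty le0)

lemma degree_le_card_large_degrees:
  assumes "v \<in> V - {x}" and "3 \<le> d v"
  shows "d v \<le> card {u \<in> V - {x}. 3 \<le> d u} + 1"
proof -
  define H where "H = {u \<in> V - {x}. 3 \<le> d u}"
  define T where "T = {u \<in> V - {x}. d u = 2} \<inter> N v"
  have "v \<in> H" "finite H" "finite T"
    using assms finite_V finite_neighbours[OF finite_V] by (simp_all add: H_def T_def)
  have "N v \<subseteq> insert x (H - {v}) \<union> T"
  proof
    fix u
    assume "u \<in> N v"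
    then have "u \<in> V" "u \<noteq> v" "adj E v u"
      using neighbours_subset[OF graph] by (auto simp: neighbours_def)
    show "u \<in> insert x (H - {v}) \<union> T"
    proof (cases "u = x \<or> u \<in> H")
      case False
      have "{x, v} \<subseteq> N u" "x \<noteq> v"
        using x_in_neighbours \<open>u \<in> V\<close> False \<open>adj E v u\<close> assms
        by (auto simp: neighbours_def adj_commute)
      then have "2 \<le> d u"
        using finite_neighbours[OF finite_V]
        by (metis card_2_iff card_mono degree_eq_card_neighbours)
      with False \<open>u \<in> V\<close> \<open>u \<in> N v\<close> show ?thesis
        by (auto simp: H_def T_def)
    qed (use \<open>u \<noteq> v\<close> in auto)
  qed
  have "card T \<le> Suc 0"
    unfolding card_le_Suc0_iff_eq[OF \<open>finite T\<close>]
  proof (intro ballI, rule ccontr)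
    fix w w'
    assume "w \<in> T" "w' \<in> T" "w \<noteq> w'"
    then have "N w \<subseteq> {x, w'}"
      by (intro neighbours_subset_if_degree_eq) (auto simp: T_def)
    moreover have "v \<in> N w"
      using \<open>w \<in> T\<close> \<open>v \<in> H\<close> adj_commute[of E v w] by (auto simp: neighbours_def H_def T_def)
    moreover have "v \<noteq> x" "v \<noteq> w'"
      using \<open>w' \<in> T\<close> \<open>v \<in> H\<close> by (auto simp: H_def T_def)
    ultimately show False
      by auto
  qed
  have "d v \<le> card (insert x (H - {v}) \<union> T)"
    unfolding degree_eq_card_neighbours
    using \<open>N v \<subseteq> _\<close> \<open>finite H\<close> \<open>finite T\<close> by (intro card_mono) auto
  also have "\<dots> \<le> card (insert x (H - {v})) + card T"
    by (rule card_Un_le)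
  also have "card (insert x (H - {v})) \<le> card H"
    using card.remove[OF \<open>finite H\<close> \<open>v \<in> H\<close>] \<open>finite H\<close> by (simp add: card_insert_if)
  finally show ?thesis
    using \<open>card T \<le> Suc 0\<close> by (simp add: H_def)
qed

lemma degree_le_two:
  assumes inj: "inj_on d {v \<in> V - {x}. 3 \<le> d v}" and "v \<in> V - {x}"
  shows "d v \<le> 2"
proof (rule ccontr)
  define H where "H = {v \<in> V - {x}. 3 \<le> d v}"
  assume "\<not> d v \<le> 2"
  with \<open>v \<in> V - {x}\<close> have "v \<in> H"
    by (simp add: H_def)
  then have "card H \<ge> 1"
    using finite_V by (auto simp: H_def Suc_le_eq card_gt_0_iff)
  have "d ` H \<subseteq> {3..card H + 1}"
    using degree_le_card_large_degrees by (fastforce simp: H_def)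
  then have "card (d ` H) \<le> card H - 1"
    using card_mono[of "{3..card H + 1}" "d ` H"] by simp
  with inj \<open>card H \<ge> 1\<close> show False
    by (simp add: H_def card_image)
qed

lemma sum_degree_others_le:
  assumes "inj_on d {v \<in> V - {x}. 3 \<le> d v}"
  shows "(\<Sum>v\<in>V - {x}. d v) \<le> card V + 1"
proof -
  define T where "T = {v \<in> V - {x}. d v = 2}"
  have "finite (V - {x})" "T \<subseteq> V - {x}"
    using finite_V by (auto simp: T_def)
  have "(\<Sum>v\<in>V - {x}. d v) = (\<Sum>v\<in>T. d v) + (\<Sum>v\<in>(V - {x}) - T. d v)"
    using sum.subset_diff[OF \<open>T \<subseteq> _\<close> \<open>finite (V - {x})\<close>] by (simp add: add.commute)
  moreover have "(\<Sum>v\<in>T. d v) = 2 * card T"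
    by (simp add: T_def)
  moreover have "(\<Sum>v\<in>(V - {x}) - T. d v) \<le> card ((V - {x}) - T)"
    using sum_bounded_above[of "(V - {x}) - T" d 1] degree_le_two[OF assms]
    by (fastforce simp: T_def)
  moreover have "card ((V - {x}) - T) = card V - 1 - card T"
    using card_Diff_subset[OF _ \<open>T \<subseteq> _\<close>] \<open>finite (V - {x})\<close> x_in_V
    by (simp add: finite_subset[OF \<open>T \<subseteq> _\<close>])
  moreover have "card T \<le> card V - 1"
    using card_mono[OF \<open>finite (V - {x})\<close> \<open>T \<subseteq> _\<close>] x_in_V by simp
  ultimately show ?thesis
    using card_degree_two_le_two[folded T_def] by linarith
qed

end

theorem lemma2p4:
  fixes V :: "'a set" and E :: "'a set set" and n :: nat
  assumes "n \<ge> 2"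
    and "simple_graph V E"
    and "card V = 2 * n + 1"
    and "card E \<ge> n ^ 2 + n"
    and "\<forall>a\<in>V. \<forall>b\<in>V. a \<noteq> b \<and> degree V E a = degree V E b \<longrightarrow> \<not> path3 V E a b"
  shows "beta V E \<ge> 3"
proof (rule ccontr)
  assume "\<not> beta V E \<ge> 3"
  then have inj: "inj_on (degree V E) {v \<in> V. 3 \<le> degree V E v}"
    using assms(2) by (intro inj_on_large_degrees) (auto simp: simple_graph_finite)
  have sum: "(\<Sum>v\<in>V. degree V E v) \<ge> 2 * n ^ 2 + 2 * n"
    using degree_sum_eq_twice_card_edges[OF assms(2)] assms(4) by simp
  obtain m where m: "n = m + 2"
    using assms(1) by (metis add.commute le_Suc_ex)
  have "\<exists>x\<in>V. degree V E x = 2 * n"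
  proof (rule ccontr)
    assume "\<not> ?thesis"
    then have "degree V E v \<le> 2 * n - 1" if "v \<in> V" for v
      using that degree_le_card_minus_one[OF assms(2) that] assms(3) by fastforce
    from sum_le_if_inj_on_large_values[OF _ this inj] sum assms(2,3) show False
      unfolding m by (simp add: simple_graph_finite algebra_simps power2_eq_square)
  qed
  then obtain x where "x \<in> V" "degree V E x = 2 * n"
    by blast
  have "adj E v x" if "v \<in> V" "v \<noteq> x" for v
    using adj_if_degree_eq_card_minus_one[OF assms(2) \<open>x \<in> V\<close> _ that]
      \<open>degree V E x = 2 * n\<close> assms(3)
    by (simp add: adj_commute)
  with assms(2,5) \<open>x \<in> V\<close> interpret universal_vertex V E x
    by unfold_locales auto
  have "(\<Sum>v\<in>V. degree V E v) = 2 * n + (\<Sum>v\<in>V - {x}. degree V E v)"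
    using \<open>x \<in> V\<close> \<open>degree V E x = 2 * n\<close> finite_V by (simp add: sum.remove)
  also have "\<dots> \<le> 4 * n + 2"
    using sum_degree_others_le inj assms(3) by (force intro: inj_on_subset)
  finally show False
    using sum unfolding m by (simp add: algebra_simps power2_eq_square)
qed

end
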